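(* Let $a, b$ be positive integers with $b>1$ and let $i \ge 3$ be an integer with $\gcd(r_b(i),a)=1$. Then $\omega \in \operatorname{Ap}(S_a(b,i))$ if and only if either $\omega = b\, a^{(i)}_i$, or there exist $(u_2,\ldots,u_{i-1}) \in R(b,i-1)$ and $u_i \in \{0,\ldots,b-1\}$ such that \[\omega = \sum_{j=2}^{i-1} u_j a^{(i-1)}_j + b^{i-1}\Big(\sum_{j=2}^{i-1} u_j\Big) + u_i\, a^{(i)}_i.\]
   Context: For $\ell \ge 1$, $r_b(\ell) = \sum_{j=0}^{\ell-1} b^j$, and $r_b(0)=0$. For integers $m\ge 2$ and $j\ge 1$, $a^{(m)}_j := r_b(m) + a\, r_b(j-1)$, and $S_a(b,m)$ is the submonoid of $\mathbb{N}$ generated by $\{a^{(m)}_j : j\ge 1\}$. $\operatorname{Ap}(S) = \{\omega\in S : \omega - \operatorname{m}(S) \notin S\}$ where $\operatorname{m}(S)$ is the smallest nonzero element of $S$. For $m\ge 2$, $R(b,m)$ is the set of $(u_2,\ldots,u_m) \in \mathbb{N}^{m-1}$ with $0 \le u_j \le b$ for all $j$, and such that $u_j = b$ implies $u_k = 0$ for all $2\le k<j$. *)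

theory Defs
  imports Main
begin

definition rb :: "nat \<Rightarrow> nat \<Rightarrow> nat" where
  "rb b l = (\<Sum>j<l. b ^ j)"

definition agen :: "nat \<Rightarrow> nat \<Rightarrow> nat \<Rightarrow> nat \<Rightarrow> nat" where
  "agen a b m j = rb b m + a * rb b (j - 1)"

inductive_set monoid_gen :: "nat set \<Rightarrow> nat set" for G :: "nat set" where
  zero: "0 \<in> monoid_gen G"
| add: "g \<in> G \<Longrightarrow> s \<in> monoid_gen G \<Longrightarrow> g + s \<in> monoid_gen G"

definition Sab :: "nat \<Rightarrow> nat \<Rightarrow> nat \<Rightarrow> nat set" where
  "Sab a b m = monoid_gen {agen a b m j | j. j \<ge> 1}"

definition multiplicity_nm :: "nat set \<Rightarrow> nat" where
  "multiplicity_nm S = (LEAST x. x \<in> S \<and> x \<noteq> 0)"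

text \<open>Apery set with respect to the multiplicity (subtraction read in the integers).\<close>
definition Apery :: "nat set \<Rightarrow> nat set" where
  "Apery S = {w \<in> S. \<not> (w \<ge> multiplicity_nm S \<and> w - multiplicity_nm S \<in> S)}"

text \<open>R(b,m): tuples (u_2,...,u_m), encoded as functions nat \<Rightarrow> nat vanishing outside {2..m}.\<close>
definition Rset :: "nat \<Rightarrow> nat \<Rightarrow> (nat \<Rightarrow> nat) set" where
  "Rset b m = {u. (\<forall>j. j \<notin> {2..m} \<longrightarrow> u j = 0) \<and> (\<forall>j\<in>{2..m}. u j \<le> b)
                 \<and> (\<forall>j\<in>{2..m}. u j = b \<longrightarrow> (\<forall>k. 2 \<le> k \<and> k < j \<longrightarrow> u k = 0))}"

end

theory Submission
  imports Defs "HOL-Library.Multiset" "HOL-Number_Theory.Cong"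
begin

(* Write S for S_a(b,m) and a_j for a^{(m)}_j. Since a_2 = r_b(m) + a and gcd(r_b(m), a) = 1, S meets
   every residue class modulo its multiplicity r_b(m), so its Apery set has at least r_b(m) elements.
   Conversely, an Apery element, written as a sum of generators, can contain neither a_1 = r_b(m) nor
   any a_j with j > m, and the relation b a_j + a_k = a_{j+1} + b a_{k-1} (2 <= k <= j) rewrites every
   representation whose multiplicity vector lies outside R(b,m) into one of smaller total index.
   Hence the Apery set lies in the image of R(b,m), which has at most r_b(m) elements, and equals it.
   Splitting R(b,i) along its last coordinate and using a^{(i)}_j = a^{(i-1)}_j + b^{i-1} gives the
   stated description. *)

lemma monoid_gen_add: "x \<in> monoid_gen G \<Longrightarrow> y \<in> monoid_gen G \<Longrightarrow> x + y \<in> monoid_gen G"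
  by (induction x rule: monoid_gen.induct) (auto simp: add.assoc intro: monoid_gen.add)

lemma monoid_gen_generator: "g \<in> G \<Longrightarrow> g \<in> monoid_gen G"
  using monoid_gen.add[OF _ monoid_gen.zero] by simp

lemma monoid_gen_mult: "x \<in> monoid_gen G \<Longrightarrow> k * x \<in> monoid_gen G"
  by (induction k) (auto intro: monoid_gen_add monoid_gen.zero)

lemma rb_0 [simp]: "rb b 0 = 0"
  by (simp add: rb_def)

lemma rb_Suc: "rb b (Suc n) = rb b n + b ^ n"
  by (simp add: rb_def)

lemma rb_Suc_Horner: "rb b (Suc n) = b * rb b n + 1"
proof (induction n)
  case (Suc n)
  have "rb b (Suc (Suc n)) = rb b n + b ^ n + b * b ^ n" by (simp add: rb_Suc)
  also have "\<dots> = b * (rb b n + b ^ n) + 1"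
    using Suc distrib_left[of b "rb b n" "b ^ n"] unfolding rb_Suc by linarith
  finally show ?case by (simp add: rb_Suc)
qed (simp add: rb_Suc)

lemma rb_add: "rb b (n + k) = rb b k + b ^ k * rb b n"
  by (induction n) (simp_all add: rb_Suc power_add algebra_simps)

lemma rb_pos: "n \<ge> 1 \<Longrightarrow> rb b n > 0"
  by (cases n) (simp_all add: rb_Suc_Horner)

lemma agen_1: "agen a b m 1 = rb b m"
  by (simp add: agen_def rb_def)

lemma agen_2: "agen a b m 2 = rb b m + a"
  by (simp add: agen_def rb_def)

lemma agen_beyond_level: "agen a b m (m + 1 + k) = agen a b m (k + 1) + a * b ^ k * rb b m"
  using rb_add[of b m k] by (simp add: agen_def algebra_simps)

lemma agen_Suc_level: "agen a b (Suc n) j = agen a b n j + b ^ n"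
  by (simp add: agen_def rb_Suc)

lemma agen_exchange:
  assumes "1 \<le> j" "2 \<le> k"
  shows "b * agen a b m j + agen a b m k = agen a b m (j + 1) + b * agen a b m (k - 1)"
proof -
  have "j = Suc (j - 1)" "k - 1 = Suc (k - 2)"
    using assms by arith+
  then have "rb b j = b * rb b (j - 1) + 1" "rb b (k - 1) = b * rb b (k - 2) + 1"
    by (metis rb_Suc_Horner)+
  then show ?thesis
    using assms by (simp add: agen_def algebra_simps numeral_2_eq_2)
qed

lemma agen_in_Sab: "j \<ge> 1 \<Longrightarrow> agen a b m j \<in> Sab a b m"
  unfolding Sab_def by (rule monoid_gen_generator) blast

lemma rb_in_Sab: "rb b m \<in> Sab a b m"
  using agen_in_Sab[of 1 a b m] agen_1[of a b m] by simp

lemma zero_in_Sab: "0 \<in> Sab a b m"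
  unfolding Sab_def by (rule monoid_gen.zero)

lemma Sab_add: "x \<in> Sab a b m \<Longrightarrow> y \<in> Sab a b m \<Longrightarrow> x + y \<in> Sab a b m"
  unfolding Sab_def by (rule monoid_gen_add)

lemma Sab_mult: "x \<in> Sab a b m \<Longrightarrow> k * x \<in> Sab a b m"
  unfolding Sab_def by (rule monoid_gen_mult)

lemma sum_mset_agen_in_Sab: "set_mset M \<subseteq> {1..} \<Longrightarrow> (\<Sum>x\<in>#M. agen a b m x) \<in> Sab a b m"
  by (induction M) (auto intro!: Sab_add agen_in_Sab zero_in_Sab)

lemma Sab_sum_mset_rep:
  assumes "w \<in> Sab a b m"
  obtains M where "set_mset M \<subseteq> {1..}" "w = (\<Sum>x\<in>#M. agen a b m x)"
proof -
  have "\<exists>M. set_mset M \<subseteq> {1..} \<and> w = (\<Sum>x\<in>#M. agen a b m x)"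
    using assms unfolding Sab_def
  proof (induction w rule: monoid_gen.induct)
    case zero
    show ?case by (intro exI[of _ "{#}"]) simp
  next
    case (add g s)
    then obtain M j where "set_mset M \<subseteq> {1..}" "s = (\<Sum>x\<in>#M. agen a b m x)"
      "j \<ge> 1" "g = agen a b m j" by blast
    then show ?case by (intro exI[of _ "add_mset j M"]) auto
  qed
  then show thesis using that by blast
qed

lemma Sab_zero_or_ge_rb: "w \<in> Sab a b m \<Longrightarrow> w = 0 \<or> w \<ge> rb b m"
  unfolding Sab_def by (induction w rule: monoid_gen.induct) (auto simp: agen_def)

lemma multiplicity_Sab: "m \<ge> 1 \<Longrightarrow> multiplicity_nm (Sab a b m) = rb b m"
  unfolding multiplicity_nm_def
  by (rule Least_equality) (use rb_in_Sab rb_pos Sab_zero_or_ge_rb in fastforce)+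

lemma rb_plus_notin_Apery_Sab:
  "m \<ge> 1 \<Longrightarrow> s \<in> Sab a b m \<Longrightarrow> rb b m + s \<notin> Apery (Sab a b m)"
  unfolding Apery_def by (simp add: multiplicity_Sab)

lemma RsetI:
  assumes "\<And>j. j \<notin> {2..m} \<Longrightarrow> u j = 0" "\<And>j. j \<in> {2..m} \<Longrightarrow> u j \<le> b"
    and "\<And>j k. j \<in> {2..m} \<Longrightarrow> u j = b \<Longrightarrow> 2 \<le> k \<Longrightarrow> k < j \<Longrightarrow> u k = 0"
  shows "u \<in> Rset b m"
  using assms unfolding Rset_def by blast

lemma
  assumes "u \<in> Rset b m"
  shows Rset_zero: "j \<notin> {2..m} \<Longrightarrow> u j = 0"
    and Rset_le: "j \<in> {2..m} \<Longrightarrow> u j \<le> b"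
    and Rset_top: "j \<in> {2..m} \<Longrightarrow> u j = b \<Longrightarrow> 2 \<le> k \<Longrightarrow> k < j \<Longrightarrow> u k = 0"
  using assms unfolding Rset_def by blast+

lemma count_notin_Rset:
  assumes "set_mset M \<subseteq> {2..m}" "count M \<notin> Rset b m"
  obtains j k where "j \<in> {2..m}" "2 \<le> k" "k \<le> j" "replicate_mset b j + {#k#} \<subseteq># M"
proof -
  have "\<forall>j. j \<notin> {2..m} \<longrightarrow> count M j = 0"
    using assms(1) by (meson count_eq_zero_iff subsetD)
  then have "\<not> (\<forall>j\<in>{2..m}. count M j \<le> b)
      \<or> \<not> (\<forall>j\<in>{2..m}. count M j = b \<longrightarrow> (\<forall>k. 2 \<le> k \<and> k < j \<longrightarrow> count M k = 0))"
    using assms(2) unfolding Rset_def by blast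
  then consider j where "j \<in> {2..m}" "count M j > b"
    | j k where "j \<in> {2..m}" "count M j = b" "2 \<le> k" "k < j" "count M k \<noteq> 0"
    by (meson not_le)
  then show thesis
  proof cases
    case (1 j)
    then have "replicate_mset b j + {#j#} \<subseteq># M" by (simp add: subseteq_mset_def)
    then show thesis using that 1 by auto
  next
    case (2 j k)
    then have "replicate_mset b j + {#k#} \<subseteq># M" by (auto simp: subseteq_mset_def)
    then show thesis using that 2 by auto
  qed
qed

lemma Rset_Suc_restrict:
  assumes "u \<in> Rset b (Suc n)" "u (Suc n) < b"
  shows "u(Suc n := 0) \<in> Rset b n"
proof (rule RsetI)
  show "(u(Suc n := 0)) j = 0" if "j \<notin> {2..n}" for j
    using that Rset_zero[OF assms(1), of j] by auto
  show "(u(Suc n := 0)) j \<le> b" if "j \<in> {2..n}" for j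
    using that Rset_le[OF assms(1), of j] by simp
  show "(u(Suc n := 0)) k = 0" if "j \<in> {2..n}" "(u(Suc n := 0)) j = b" "2 \<le> k" "k < j" for j k
    using that Rset_top[OF assms(1), of j k] by simp
qed

lemma Rset_Suc_extend:
  assumes "n \<ge> 1" "u \<in> Rset b n" "t < b"
  shows "u(Suc n := t) \<in> Rset b (Suc n)"
proof (rule RsetI)
  show "(u(Suc n := t)) j = 0" if "j \<notin> {2..Suc n}" for j
    using that assms(1) Rset_zero[OF assms(2), of j] by auto
  show "(u(Suc n := t)) j \<le> b" if "j \<in> {2..Suc n}" for j
    using that assms(3) Rset_le[OF assms(2), of j] by auto
  show "(u(Suc n := t)) k = 0" if "j \<in> {2..Suc n}" "(u(Suc n := t)) j = b" "2 \<le> k" "k < j" for j k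
    using that assms(3) Rset_top[OF assms(2), of j k] by (cases "j = Suc n") auto
qed

lemma Rset_Suc_top:
  assumes "n \<ge> 1" "u \<in> Rset b (Suc n)" "u (Suc n) = b"
  shows "u = (\<lambda>x. if x = Suc n then b else 0)"
proof
  fix x
  have "Suc n \<in> {2..Suc n}" using assms(1) by simp
  then show "u x = (if x = Suc n then b else 0)"
    using Rset_zero[OF assms(2), of x] Rset_top[OF assms(2), of "Suc n" x] assms(3)
    by (cases "x \<in> {2..Suc n}") auto
qed

lemma top_in_Rset_Suc:
  assumes "n \<ge> 1"
  shows "(\<lambda>x. if x = Suc n then b else 0) \<in> Rset b (Suc n)"
  by (rule RsetI) (use assms in auto)

lemma Rset_Suc:
  assumes "n \<ge> 1"
  shows "Rset b (Suc n) = insert (\<lambda>x. if x = Suc n then b else 0)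
           ((\<lambda>(u, t). u(Suc n := t)) ` (Rset b n \<times> {..<b}))"
proof (intro equalityI subsetI)
  fix u assume u: "u \<in> Rset b (Suc n)"
  have "Suc n \<in> {2..Suc n}" using assms by simp
  then consider "u (Suc n) = b" | "u (Suc n) < b" using Rset_le[OF u] by fastforce
  then show "u \<in> insert (\<lambda>x. if x = Suc n then b else 0) ((\<lambda>(u, t). u(Suc n := t)) ` (Rset b n \<times> {..<b}))"
  proof cases
    case 1
    then show ?thesis using Rset_Suc_top[OF assms u] by simp
  next
    case 2
    then have "(u(Suc n := 0), u (Suc n)) \<in> Rset b n \<times> {..<b}"
      using Rset_Suc_restrict[OF u] by simp
    then show ?thesis by (auto intro!: image_eqI[where x = "(u(Suc n := 0), u (Suc n))"])
  qed
qed (use assms top_in_Rset_Suc Rset_Suc_extend in auto)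

lemma card_Rset_le:
  assumes "n \<ge> 1"
  shows "finite (Rset b n) \<and> card (Rset b n) \<le> rb b n"
  using assms
proof (induction n rule: nat_induct_at_least)
  case base
  have "Rset b 1 = {\<lambda>_. 0}" unfolding Rset_def by auto
  then show ?case by (simp add: rb_def)
next
  case (Suc n)
  let ?F = "(\<lambda>(u, t). u(Suc n := t)) ` (Rset b n \<times> {..<b})"
  have "card ?F \<le> card (Rset b n) * b"
    using card_image_le[of "Rset b n \<times> {..<b}"] Suc.IH by (simp add: card_cartesian_product)
  also have "\<dots> \<le> rb b n * b" using Suc.IH by simp
  finally have "card ?F \<le> rb b n * b" .
  moreover have "finite ?F" using Suc.IH by simp
  ultimately have "card (insert (\<lambda>x. if x = Suc n then b else 0) ?F) \<le> rb b (Suc n)"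
    by (simp add: card_insert_if rb_Suc_Horner mult.commute)
  then show ?case using Suc.IH by (simp add: Rset_Suc[OF Suc.hyps])
qed

lemma sum_mset_eq_sum_count:
  assumes "set_mset M \<subseteq> A" "finite A"
  shows "(\<Sum>x\<in>#M. f x) = (\<Sum>j\<in>A. count M j * f j)"
  using assms(1)
proof (induction M)
  case (add x M)
  then have "x \<in> A" by simp
  have "(\<Sum>j\<in>A. count (add_mset x M) j * f j) = (\<Sum>j\<in>A. count M j * f j + (if j = x then f x else 0))"
    by (intro sum.cong) auto
  also have "\<dots> = (\<Sum>j\<in>A. count M j * f j) + f x"
    using \<open>x \<in> A\<close> assms(2) by (simp add: sum.distrib)
  finally show ?case using add by simp
qed simp

lemma agen_outside_eq_rb_plus:
  assumes "a > 0" "b > 0" "x \<ge> 1" "x \<notin> {2..m}"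
  shows "\<exists>s\<in>Sab a b m. agen a b m x = rb b m + s"
proof (cases "x = 1")
  case True
  then show ?thesis using agen_1[of a b m] zero_in_Sab by auto
next
  case False
  then have "x > m" using assms(3,4) by auto
  then obtain k where x: "x = m + 1 + k" using less_imp_Suc_add by fastforce
  obtain t where t: "a * b ^ k = Suc t" using assms(1,2) by (cases "a * b ^ k") auto
  have "agen a b m x = rb b m + (agen a b m (k + 1) + t * rb b m)"
    using agen_beyond_level[of a b m k] by (simp add: x t)
  moreover have "agen a b m (k + 1) + t * rb b m \<in> Sab a b m"
    by (intro Sab_add Sab_mult agen_in_Sab rb_in_Sab) simp
  ultimately show ?thesis by blast
qed

lemma Apery_rep_support:
  assumes "a > 0" "b > 0" "m \<ge> 1" "w \<in> Apery (Sab a b m)"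
    and M: "set_mset M \<subseteq> {1..}" "w = (\<Sum>x\<in>#M. agen a b m x)"
  shows "set_mset M \<subseteq> {2..m}"
proof
  fix x assume x: "x \<in># M"
  have rest: "(\<Sum>y\<in>#M - {#x#}. agen a b m y) \<in> Sab a b m"
    using M(1) by (intro sum_mset_agen_in_Sab) (meson in_diffD subset_iff)
  have w: "w = agen a b m x + (\<Sum>y\<in>#M - {#x#}. agen a b m y)"
    using M(2) x by (metis insert_DiffM sum_mset.insert image_mset_add_mset)
  show "x \<in> {2..m}"
  proof (rule ccontr)
    assume "x \<notin> {2..m}"
    then obtain s where "s \<in> Sab a b m" "agen a b m x = rb b m + s"
      using agen_outside_eq_rb_plus assms(1,2) M(1) x by blast
    then have "w = rb b m + (s + (\<Sum>y\<in>#M - {#x#}. agen a b m y))"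
      "s + (\<Sum>y\<in>#M - {#x#}. agen a b m y) \<in> Sab a b m"
      using w rest Sab_add by auto
    then show False using rb_plus_notin_Apery_Sab assms(3,4) by metis
  qed
qed

lemma exchange_decreases_sum:
  fixes b j k :: nat
  assumes "b \<ge> 2" "1 \<le> k" "k \<le> j"
  shows "j + 1 + b * (k - 1) < b * j + k"
proof -
  have "b * (k - 1) + b * (j + 1 - k) = b * j"
    using assms(2,3) by (simp flip: add_mult_distrib2)
  moreover have "j + 1 - k < b * (j + 1 - k)"
    using assms by simp
  ultimately show ?thesis using assms(3) by linarith
qed

lemma Apery_exchange:
  assumes "a > 0" "b \<ge> 2" "m \<ge> 1" "w \<in> Apery (Sab a b m)"
    and M: "set_mset M \<subseteq> {2..m}" "w = (\<Sum>x\<in>#M. agen a b m x)"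
    and jk: "2 \<le> k" "k \<le> j" "replicate_mset b j + {#k#} \<subseteq># M"
  obtains M' where "set_mset M' \<subseteq> {2..m}" "w = (\<Sum>x\<in>#M'. agen a b m x)"
    "(\<Sum>x\<in>#M'. x) < (\<Sum>x\<in>#M. x)"
proof -
  define R where "R = M - (replicate_mset b j + {#k#})"
  have MR: "M = R + replicate_mset b j + {#k#}"
    unfolding R_def using subset_mset.diff_add[OF jk(3)] by (simp add: add.assoc)
  have R: "set_mset R \<subseteq> {2..m}" "(\<Sum>x\<in>#R. agen a b m x) \<in> Sab a b m"
    using M(1) by (auto simp: MR intro!: sum_mset_agen_in_Sab)
  have w: "w = (\<Sum>x\<in>#R. agen a b m x) + agen a b m (j + 1) + b * agen a b m (k - 1)"
    using M(2) agen_exchange[of j k b a m] jk by (simp add: MR)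
  have j1: "j + 1 \<in> {2..m}"
  proof (rule ccontr)
    assume "j + 1 \<notin> {2..m}"
    then obtain s where "s \<in> Sab a b m" "agen a b m (j + 1) = rb b m + s"
      using agen_outside_eq_rb_plus[of a b "j + 1" m] assms(1,2) by auto
    then have "w = rb b m + (s + (\<Sum>x\<in>#R. agen a b m x) + b * agen a b m (k - 1))"
      "s + (\<Sum>x\<in>#R. agen a b m x) + b * agen a b m (k - 1) \<in> Sab a b m"
      using w R(2) jk(1) by (auto intro!: Sab_add Sab_mult agen_in_Sab)
    then show False using rb_plus_notin_Apery_Sab assms(3,4) by metis
  qed
  have k1: "k - 1 \<in> {2..m}"
  proof (rule ccontr)
    assume "k - 1 \<notin> {2..m}"
    then obtain s where s: "s \<in> Sab a b m" "agen a b m (k - 1) = rb b m + s"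
      using agen_outside_eq_rb_plus[of a b "k - 1" m] assms(1,2) jk(1) by fastforce
    obtain c where "b = Suc c" using assms(2) by (cases b) auto
    then have "b * agen a b m (k - 1) = rb b m + (s + c * agen a b m (k - 1))"
      using s(2) by simp
    then have "w = rb b m + (s + c * agen a b m (k - 1) + (\<Sum>x\<in>#R. agen a b m x) + agen a b m (j + 1))"
      using w by simp
    moreover have "s + c * agen a b m (k - 1) + (\<Sum>x\<in>#R. agen a b m x) + agen a b m (j + 1) \<in> Sab a b m"
      using s(1) R(2) jk(1) by (intro Sab_add Sab_mult agen_in_Sab) simp_all
    ultimately show False using rb_plus_notin_Apery_Sab assms(3,4) by metis
  qed
  show thesis
  proof
    let ?M' = "R + {#j + 1#} + replicate_mset b (k - 1)"
    show "set_mset ?M' \<subseteq> {2..m}" using R(1) j1 k1 by auto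
    show "w = (\<Sum>x\<in>#?M'. agen a b m x)" using w by simp
    have "j + 1 + b * (k - 1) < b * j + k"
      using exchange_decreases_sum assms(2) jk by simp
    then show "(\<Sum>x\<in>#?M'. x) < (\<Sum>x\<in>#M. x)" by (simp add: MR)
  qed
qed

lemma Apery_Sab_normal_form:
  assumes "a > 0" "b \<ge> 2" "m \<ge> 1" "w \<in> Apery (Sab a b m)"
  obtains M where "count M \<in> Rset b m" "w = (\<Sum>x\<in>#M. agen a b m x)"
proof -
  have "\<exists>M. count M \<in> Rset b m \<and> w = (\<Sum>x\<in>#M. agen a b m x)"
    if "set_mset M \<subseteq> {2..m}" "w = (\<Sum>x\<in>#M. agen a b m x)" for M
    using that
  proof (induction "\<Sum>x\<in>#M. x" arbitrary: M rule: less_induct)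
    case less
    show ?case
    proof (cases "count M \<in> Rset b m")
      case False
      then obtain j k where "2 \<le> k" "k \<le> j" "replicate_mset b j + {#k#} \<subseteq># M"
        using count_notin_Rset[OF less.prems(1)] by metis
      then obtain M' where "set_mset M' \<subseteq> {2..m}" "w = (\<Sum>x\<in>#M'. agen a b m x)"
        "(\<Sum>x\<in>#M'. x) < (\<Sum>x\<in>#M. x)"
        by (rule Apery_exchange[OF assms less.prems])
      with less.hyps show ?thesis by blast
    qed (use less.prems in blast)
  qed
  moreover obtain M where "set_mset M \<subseteq> {1..}" "w = (\<Sum>x\<in>#M. agen a b m x)"
    using assms(4) unfolding Apery_def by (blast elim: Sab_sum_mset_rep)
  moreover have "set_mset M \<subseteq> {2..m}"
    using Apery_rep_support[of a b m w M] assms calculation(2,3) by simp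
  ultimately show thesis using that by blast
qed

definition agen_comb :: "nat \<Rightarrow> nat \<Rightarrow> nat \<Rightarrow> (nat \<Rightarrow> nat) \<Rightarrow> nat" where
  "agen_comb a b m u = (\<Sum>j=2..m. u j * agen a b m j)"

lemma Apery_Sab_subset:
  assumes "a > 0" "b \<ge> 2" "m \<ge> 1"
  shows "Apery (Sab a b m) \<subseteq> agen_comb a b m ` Rset b m"
proof
  fix w assume "w \<in> Apery (Sab a b m)"
  then obtain M where M: "count M \<in> Rset b m" "w = (\<Sum>x\<in>#M. agen a b m x)"
    using Apery_Sab_normal_form[OF assms] by metis
  then have "set_mset M \<subseteq> {2..m}"
    using Rset_zero[OF M(1)] by (meson count_eq_zero_iff subsetI)
  then have "w = agen_comb a b m (count M)"
    using M(2) sum_mset_eq_sum_count[of M "{2..m}"] by (simp add: agen_comb_def)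
  then show "w \<in> agen_comb a b m ` Rset b m" using M(1) by blast
qed

lemma Sab_hits_all_residues:
  assumes "coprime a (rb b m)" "c < rb b m"
  shows "\<exists>x\<in>Sab a b m. x mod rb b m = c"
proof -
  obtain y where y: "[a * y = 1] (mod rb b m)"
    using cong_solve_coprime_nat[OF assms(1)] by auto
  have "(y * c) * agen a b m 2 = (a * y) * c + (y * c) * rb b m"
    by (simp add: agen_2 algebra_simps)
  then have "[(y * c) * agen a b m 2 = (a * y) * c] (mod rb b m)"
    by (simp add: cong_def)
  also have "[(a * y) * c = 1 * c] (mod rb b m)"
    using y by (rule cong_scalar_right)
  finally have "(y * c) * agen a b m 2 mod rb b m = c"
    using assms(2) by (simp add: cong_def)
  moreover have "(y * c) * agen a b m 2 \<in> Sab a b m"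
    by (intro Sab_mult agen_in_Sab) simp
  ultimately show ?thesis by blast
qed

lemma card_Apery_ge:
  fixes S :: "nat set"
  defines "r \<equiv> multiplicity_nm S"
  assumes "r > 0" "\<And>c. c < r \<Longrightarrow> \<exists>x\<in>S. x mod r = c" "finite (Apery S)"
  shows "r \<le> card (Apery S)"
proof -
  define f where "f c = (LEAST x. x \<in> S \<and> x mod r = c)" for c
  have f: "f c \<in> S" "f c mod r = c" if "c < r" for c
    using LeastI_ex[OF assms(3)[OF that, unfolded Bex_def]] by (simp_all add: f_def)
  have "f c \<in> Apery S" if "c < r" for c
  proof -
    have "\<not> (f c \<ge> r \<and> f c - r \<in> S)"
    proof
      assume h: "f c \<ge> r \<and> f c - r \<in> S"
      then have "(f c - r) mod r = c" using f[OF that] by (simp add: le_mod_geq)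
      then have "f c \<le> f c - r"
        using h unfolding f_def[of c] by (intro Least_le) simp
      then show False using assms(2) h f[OF that] by linarith
    qed
    then show ?thesis unfolding Apery_def r_def using f[OF that] by simp
  qed
  moreover have "inj_on f {..<r}" by (intro inj_onI) (metis f(2) lessThan_iff)
  ultimately have "card {..<r} \<le> card (Apery S)"
    by (intro card_inj_on_le[OF _ _ assms(4)]) auto
  then show ?thesis by simp
qed

lemma Apery_Sab_eq:
  assumes "a > 0" "b \<ge> 2" "m \<ge> 1" "coprime a (rb b m)"
  shows "Apery (Sab a b m) = agen_comb a b m ` Rset b m"
proof (rule card_seteq)
  show "finite (agen_comb a b m ` Rset b m)"
    using card_Rset_le[OF assms(3)] by simp
  show "Apery (Sab a b m) \<subseteq> agen_comb a b m ` Rset b m"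
    using Apery_Sab_subset[OF assms(1-3)] .
  have "card (agen_comb a b m ` Rset b m) \<le> card (Rset b m)"
    using card_Rset_le[OF assms(3)] by (simp add: card_image_le)
  also have "\<dots> \<le> rb b m"
    using card_Rset_le[OF assms(3)] by simp
  also have "\<dots> \<le> card (Apery (Sab a b m))"
  proof (rule card_Apery_ge[where S = "Sab a b m", unfolded multiplicity_Sab[OF assms(3)]])
    show "rb b m > 0" using rb_pos[OF assms(3)] .
    show "\<exists>x\<in>Sab a b m. x mod rb b m = c" if "c < rb b m" for c
      using Sab_hits_all_residues[OF assms(4) that] .
    show "finite (Apery (Sab a b m))"
      using finite_subset[OF Apery_Sab_subset[OF assms(1-3)]] card_Rset_le[OF assms(3)] by simp
  qed
  finally show "card (agen_comb a b m ` Rset b m) \<le> card (Apery (Sab a b m))" .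
qed

lemma agen_comb_top:
  assumes "m \<ge> 2"
  shows "agen_comb a b m (\<lambda>x. if x = m then b else 0) = b * agen a b m m"
proof -
  have "agen_comb a b m (\<lambda>x. if x = m then b else 0) = (\<Sum>j=2..m. if j = m then b * agen a b m m else 0)"
    unfolding agen_comb_def by (intro sum.cong) auto
  then show ?thesis using assms by simp
qed

lemma agen_comb_Suc_update:
  assumes "n \<ge> 1"
  shows "agen_comb a b (Suc n) (u(Suc n := t))
    = (\<Sum>j=2..n. u j * agen a b n j) + b ^ n * (\<Sum>j=2..n. u j) + t * agen a b (Suc n) (Suc n)"
proof -
  have "{2..Suc n} = insert (Suc n) {2..n}" using assms by auto
  then have "agen_comb a b (Suc n) (u(Suc n := t))
      = t * agen a b (Suc n) (Suc n) + (\<Sum>j=2..n. u j * (agen a b n j + b ^ n))"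
    by (simp add: agen_comb_def agen_Suc_level)
  then show ?thesis
    by (simp add: algebra_simps sum.distrib sum_distrib_left)
qed

theorem corollary18:
  fixes a b i :: nat and \<omega> :: nat
  assumes "a > 0" and "b > 1" and "i \<ge> 3" and "gcd (rb b i) a = 1"
  shows "\<omega> \<in> Apery (Sab a b i) \<longleftrightarrow>
           (\<omega> = b * agen a b i i \<or>
            (\<exists>u \<in> Rset b (i - 1). \<exists>ui < b.
               \<omega> = (\<Sum>j=2..i-1. u j * agen a b (i - 1) j) + b ^ (i - 1) * (\<Sum>j=2..i-1. u j)
                   + ui * agen a b i i))"
proof -
  define n where "n = i - 1"
  have i: "i = Suc n" "n \<ge> 2" using assms(3) by (auto simp: n_def)
  have "Apery (Sab a b i) = agen_comb a b i ` Rset b (Suc n)"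
    using Apery_Sab_eq[of a b i] assms i by (simp add: coprime_iff_gcd_eq_1 gcd.commute)
  also have "\<dots> = insert (b * agen a b i i)
      ((\<lambda>(u, t). agen_comb a b i (u(Suc n := t))) ` (Rset b n \<times> {..<b}))"
    using i by (simp add: Rset_Suc image_image agen_comb_top prod.case_distrib)
  finally have "\<omega> \<in> Apery (Sab a b i) \<longleftrightarrow> \<omega> = b * agen a b i i
      \<or> (\<exists>u\<in>Rset b n. \<exists>t<b. \<omega> = agen_comb a b i (u(Suc n := t)))"
    by auto
  then show ?thesis
    using i by (simp add: agen_comb_Suc_update)
qed

end
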